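(* Let $\epsilon>0$ and let $\Lambda_\epsilon\subset\mathbb{R}^d$ be an $\epsilon$-lattice. Then every $\mathbf{x}\in\mathbb{R}^d$ lies in the convex hull of $B_{7\epsilon}(\mathbf{x})\cap\Lambda_\epsilon$.
   Context: $\|\cdot\|$ is a fixed one of the $\ell_1,\ell_2,\ell_\infty$ norms and $B_r(\mathbf{x})=\{\mathbf{z}:\|\mathbf{z}-\mathbf{x}\|\le r\}$. A lattice is the set of integer combinations of a basis of $\mathbb{R}^d$. Its packing radius $r_p$ is the supremum of $r$ such that balls of radius $r$ around distinct lattice points are disjoint; its cover radius $r_c$ is the infimum of $r$ such that balls of radius $r$ around lattice points cover $\mathbb{R}^d$. An $\epsilon$-lattice is a lattice with $\epsilon=r_p\le r_c\le3\epsilon$. *)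

theory Defs
  imports "HOL-Analysis.Analysis"
begin

datatype normkind = L1 | L2 | Linf

definition pnorm :: "normkind \<Rightarrow> real^'n \<Rightarrow> real" where
  "pnorm p x = (case p of
      L1 \<Rightarrow> (\<Sum>i\<in>UNIV. \<bar>x $ i\<bar>)
    | L2 \<Rightarrow> norm x
    | Linf \<Rightarrow> Max (range (\<lambda>i. \<bar>x $ i\<bar>)))"

definition pball :: "normkind \<Rightarrow> real \<Rightarrow> real^'n \<Rightarrow> (real^'n) set" where
  "pball p r x = {z. pnorm p (z - x) \<le> r}"

definition is_lattice :: "(real^'n) set \<Rightarrow> bool" where
  "is_lattice L \<longleftrightarrow> (\<exists>b :: 'n \<Rightarrow> real^'n.
      inj b \<and> independent (range b) \<and> span (range b) = UNIV \<and>
      L = {v. \<exists>k :: 'n \<Rightarrow> int. v = (\<Sum>i\<in>UNIV. of_int (k i) *\<^sub>R b i)})"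

definition packing_radius :: "normkind \<Rightarrow> (real^'n) set \<Rightarrow> real" where
  "packing_radius p L = Sup {r. \<forall>x\<in>L. \<forall>y\<in>L. x \<noteq> y \<longrightarrow> pball p r x \<inter> pball p r y = {}}"

definition cover_radius :: "normkind \<Rightarrow> (real^'n) set \<Rightarrow> real" where
  "cover_radius p L = Inf {r. (\<Union>x\<in>L. pball p r x) = UNIV}"

definition eps_lattice :: "normkind \<Rightarrow> real \<Rightarrow> (real^'n) set \<Rightarrow> bool" where
  "eps_lattice p \<epsilon> L \<longleftrightarrow> is_lattice L \<and> \<epsilon> = packing_radius p L \<and>
     packing_radius p L \<le> cover_radius p L \<and> cover_radius p L \<le> 3 * \<epsilon>"

end

theory Submission
  imports Defs
begin

text \<open>Suppose every point lies within r of the lattice and 2r < R (for an eps-lattice take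
  r = 13/4 eps, above the cover radius, and R = 7 eps). If x were not in the hull of the lattice
  points within R of x, a linear functional u would separate x from them. Step from x a distance
  R - r in a direction on which u is nearly maximal over the unit ball, so that u decreases; the
  lattice point within r of the landing point lies within R of x, and since r < R - r the last
  step cannot recover what was lost, so u is smaller there than at x: a contradiction.\<close>

locale norm_function =
  fixes N :: "'a::euclidean_space \<Rightarrow> real"
  assumes triangle: "N (a + b) \<le> N a + N b"
    and scale: "N (c *\<^sub>R v) \<le> \<bar>c\<bar> * N v"
    and norm_bound: "\<exists>K\<ge>0. \<forall>v. norm v \<le> K * N v"
begin

lemma minus: "N (- v) = N v"
  using scale[of "-1" v] scale[of "-1" "- v"] by simp

lemma nonneg: "0 \<le> N v"
  using triangle[of v "- v"] triangle[of 0 0] minus[of v] by simp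

lemma sum_le: "finite A \<Longrightarrow> N (sum f A) \<le> (\<Sum>i\<in>A. N (f i))"
proof (induction A rule: finite_induct)
  case empty
  then show ?case using scale[of 0 0] by simp
next
  case (insert a A)
  then show ?case using triangle[of "f a" "sum f A"] by simp
qed

lemma nearly_maximizing_direction:
  assumes "u \<noteq> 0" and "0 \<le> \<theta>" and "\<theta> < 1"
  obtains w where "N w \<le> 1" and "\<And>v. N v \<le> 1 \<Longrightarrow> \<theta> * (u \<bullet> v) < u \<bullet> w"
proof -
  define D where "D = {u \<bullet> v | v. N v \<le> 1}"
  obtain K where "K \<ge> 0" and K: "\<And>v. norm v \<le> K * N v"
    using norm_bound by blast
  have bdd: "bdd_above D"
  proof (rule bdd_aboveI)
    fix d assume "d \<in> D"
    then obtain v where d: "d = u \<bullet> v" and "N v \<le> 1"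
      unfolding D_def by blast
    have "d \<le> norm u * norm v"
      unfolding d by (rule order_trans[OF _ Cauchy_Schwarz_ineq2]) simp
    also have "\<dots> \<le> norm u * K"
      using K[of v] \<open>N v \<le> 1\<close> \<open>K \<ge> 0\<close>
      by (intro mult_left_mono) (auto intro: order_trans mult_left_le)
    finally show "d \<le> norm u * K" .
  qed
  define u' where "u' = (1 / (N u + 1)) *\<^sub>R u"
  have "N u' \<le> \<bar>1 / (N u + 1)\<bar> * N u"
    unfolding u'_def by (rule scale)
  also have "\<dots> \<le> 1"
    using nonneg[of u] by (simp add: field_simps)
  finally have "u \<bullet> u' \<in> D"
    unfolding D_def by blast
  moreover have "u \<bullet> u' > 0"
    unfolding u'_def using \<open>u \<noteq> 0\<close> nonneg[of u] by (simp add: add_pos_nonneg)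
  ultimately have "Sup D > 0"
    using bdd cSup_upper[of _ D] by fastforce
  then have "\<theta> * Sup D < Sup D"
    using \<open>\<theta> < 1\<close> by simp
  then obtain w where "N w \<le> 1" and "\<theta> * Sup D < u \<bullet> w"
    using less_cSup_iff[of D] bdd \<open>u \<bullet> u' \<in> D\<close> unfolding D_def by blast
  moreover have "\<theta> * (u \<bullet> v) \<le> \<theta> * Sup D" if "N v \<le> 1" for v
    using that bdd \<open>0 \<le> \<theta>\<close> by (intro mult_left_mono cSup_upper) (auto simp: D_def)
  ultimately show thesis
    using that by fastforce
qed

lemma mem_convex_hull_if_covering:
  assumes cover: "\<And>y. \<exists>z\<in>L. N (y - z) \<le> r" and "0 < r" and "2 * r < R"
  shows "x \<in> convex hull {z \<in> L. N (z - x) \<le> R}"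
proof (rule ccontr)
  let ?C = "convex hull {z \<in> L. N (z - x) \<le> R}"
  assume "x \<notin> ?C"
  then have "0 \<notin> (\<lambda>c. c - x) ` ?C" and "convex ((\<lambda>c. c - x) ` ?C)"
    by auto
  then obtain u where "u \<noteq> 0" and "\<forall>c\<in>(\<lambda>c. c - x) ` ?C. 0 \<le> u \<bullet> c"
    using separating_hyperplane_set_0 by blast
  then have separates: "u \<bullet> x \<le> u \<bullet> z" if "z \<in> L" and "N (z - x) \<le> R" for z
    using that hull_inc[of z] by (auto simp: inner_diff_right)
  define \<rho> where "\<rho> = R - r"
  have "0 < \<rho>" and "r / \<rho> < 1"
    using assms(2,3) by (auto simp: \<rho>_def)
  then have "0 \<le> r / \<rho>"
    using \<open>0 < r\<close> by simp
  obtain w where "N w \<le> 1" and w: "\<And>v. N v \<le> 1 \<Longrightarrow> r / \<rho> * (u \<bullet> v) < u \<bullet> w"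
    using nearly_maximizing_direction[OF \<open>u \<noteq> 0\<close> \<open>0 \<le> r / \<rho>\<close> \<open>r / \<rho> < 1\<close>] by blast
  define y where "y = x - \<rho> *\<^sub>R w"
  obtain z where "z \<in> L" and "N (y - z) \<le> r"
    using cover by blast
  then have zy: "N (z - y) \<le> r"
    using minus[of "y - z"] by simp
  have "N (y - x) \<le> \<bar>- \<rho>\<bar> * N w"
    unfolding y_def using scale[of "- \<rho>" w] by simp
  also have "\<dots> \<le> \<rho>"
    using \<open>N w \<le> 1\<close> \<open>0 < \<rho>\<close> by (simp add: mult_left_le)
  finally have "N (z - x) \<le> R"
    using triangle[of "z - y" "y - x"] zy by (simp add: \<rho>_def)
  with \<open>z \<in> L\<close> have "u \<bullet> x \<le> u \<bullet> z"
    by (rule separates)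
  have "N ((1 / r) *\<^sub>R (z - y)) \<le> \<bar>1 / r\<bar> * N (z - y)"
    by (rule scale)
  also have "\<dots> \<le> \<bar>1 / r\<bar> * r"
    using zy by (rule mult_left_mono) simp
  also have "\<dots> = 1"
    using \<open>0 < r\<close> by simp
  finally have "r / \<rho> * (u \<bullet> ((1 / r) *\<^sub>R (z - y))) < u \<bullet> w"
    by (rule w)
  then have "u \<bullet> (z - y) / \<rho> < u \<bullet> w"
    using \<open>0 < r\<close> by (simp add: inner_scaleR_right)
  then have "u \<bullet> (z - y) < \<rho> * (u \<bullet> w)"
    using \<open>0 < \<rho>\<close> by (simp add: divide_less_eq mult.commute)
  then have "u \<bullet> z < u \<bullet> x"
    by (simp add: y_def inner_diff_right)
  with \<open>u \<bullet> x \<le> u \<bullet> z\<close> show False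
    by simp
qed

end

lemma lattice_covers:
  fixes N :: "real^'n \<Rightarrow> real"
  assumes "norm_function N" and "is_lattice L"
  shows "\<exists>R. \<forall>y. \<exists>z\<in>L. N (y - z) \<le> R"
proof -
  interpret norm_function N by fact
  obtain b :: "'n \<Rightarrow> real^'n" where inj: "inj b" and sp: "span (range b) = UNIV"
    and L: "L = {v. \<exists>k :: 'n \<Rightarrow> int. v = (\<Sum>i\<in>UNIV. of_int (k i) *\<^sub>R b i)}"
    using assms(2) unfolding is_lattice_def by blast
  have "\<exists>z\<in>L. N (y - z) \<le> (\<Sum>i\<in>UNIV. N (b i))" for y
  proof -
    obtain u where u: "y = (\<Sum>v\<in>range b. u v *\<^sub>R v)"
      using span_finite[of "range b"] sp by auto
    define c where "c i = u (b i)" for i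
    have y: "y = (\<Sum>i\<in>UNIV. c i *\<^sub>R b i)"
      unfolding u c_def by (simp add: sum.reindex[OF inj])
    define z where "z = (\<Sum>i\<in>UNIV. of_int \<lfloor>c i\<rfloor> *\<^sub>R b i)"
    have "z \<in> L"
      unfolding L z_def by (intro CollectI exI[of _ "\<lambda>i. \<lfloor>c i\<rfloor>"]) (rule refl)
    have "y - z = (\<Sum>i\<in>UNIV. (c i - of_int \<lfloor>c i\<rfloor>) *\<^sub>R b i)"
      unfolding y z_def by (simp add: sum_subtractf[symmetric] scaleR_diff_left)
    then have "N (y - z) \<le> (\<Sum>i\<in>UNIV. N ((c i - of_int \<lfloor>c i\<rfloor>) *\<^sub>R b i))"
      using sum_le[of UNIV "\<lambda>i. (c i - of_int \<lfloor>c i\<rfloor>) *\<^sub>R b i"] by simp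
    also have "\<dots> \<le> (\<Sum>i\<in>UNIV. N (b i))"
    proof (rule sum_mono)
      fix i
      have "\<bar>c i - of_int \<lfloor>c i\<rfloor>\<bar> \<le> 1"
        by linarith
      then show "N ((c i - of_int \<lfloor>c i\<rfloor>) *\<^sub>R b i) \<le> N (b i)"
        using scale[of "c i - of_int \<lfloor>c i\<rfloor>" "b i"] nonneg[of "b i"]
        by (meson mult_left_le_one_le order_trans abs_ge_zero)
    qed
    finally show ?thesis
      using \<open>z \<in> L\<close> by blast
  qed
  then show ?thesis
    by blast
qed

lemma abs_nth_le_Max: "\<bar>x $ i\<bar> \<le> Max (range (\<lambda>i. \<bar>x $ i\<bar>))"
  by (rule Max_ge) auto

lemma Max_abs_nth_le: "(\<And>i. \<bar>x $ i\<bar> \<le> c) \<Longrightarrow> Max (range (\<lambda>i. \<bar>x $ i\<bar>)) \<le> c"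
  by (subst Max_le_iff) auto

lemma pnorm_triangle: "pnorm p (a + b) \<le> pnorm p a + pnorm p b"
proof (cases p)
  case L1
  then show ?thesis
    by (auto simp: pnorm_def sum.distrib[symmetric] intro!: sum_mono abs_triangle_ineq)
next
  case L2
  then show ?thesis
    by (simp add: pnorm_def norm_triangle_ineq)
next
  case Linf
  have "\<bar>(a + b) $ i\<bar> \<le> Max (range (\<lambda>i. \<bar>a $ i\<bar>)) + Max (range (\<lambda>i. \<bar>b $ i\<bar>))" for i
    unfolding vector_add_component
    using abs_triangle_ineq[of "a $ i" "b $ i"] abs_nth_le_Max[of a i] abs_nth_le_Max[of b i]
    by linarith
  then show ?thesis
    using Linf by (simp add: pnorm_def Max_abs_nth_le)
qed

lemma pnorm_scaleR: "pnorm p (c *\<^sub>R v) \<le> \<bar>c\<bar> * pnorm p v"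
proof (cases p)
  case L1
  then show ?thesis
    by (simp add: pnorm_def sum_distrib_left abs_mult)
next
  case L2
  then show ?thesis
    by (simp add: pnorm_def)
next
  case Linf
  have "\<bar>(c *\<^sub>R v) $ i\<bar> \<le> \<bar>c\<bar> * Max (range (\<lambda>i. \<bar>v $ i\<bar>))" for i
    unfolding vector_scaleR_component real_scaleR_def abs_mult
    by (intro mult_left_mono abs_nth_le_Max abs_ge_zero)
  then show ?thesis
    using Linf by (simp add: pnorm_def Max_abs_nth_le)
qed

lemma norm_le_pnorm: "\<exists>K\<ge>0. \<forall>v::real^'n. norm v \<le> K * pnorm p v"
proof (cases p)
  case L1
  then show ?thesis
    by (intro exI[of _ 1]) (simp add: pnorm_def norm_le_l1_cart)
next
  case L2
  then show ?thesis
    by (intro exI[of _ 1]) (simp add: pnorm_def)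
next
  case Linf
  have "norm v \<le> real CARD('n) * pnorm p v" for v :: "real^'n"
  proof -
    have "norm v \<le> (\<Sum>i\<in>UNIV. \<bar>v $ i\<bar>)"
      by (rule norm_le_l1_cart)
    also have "\<dots> \<le> (\<Sum>i\<in>(UNIV::'n set). Max (range (\<lambda>i. \<bar>v $ i\<bar>)))"
      by (intro sum_mono abs_nth_le_Max)
    finally show ?thesis
      using Linf by (simp add: pnorm_def)
  qed
  then show ?thesis
    by (intro exI[of _ "real CARD('n)"] conjI allI) simp_all
qed

lemma norm_function_pnorm: "norm_function (pnorm p)"
  by unfold_locales (rule pnorm_triangle pnorm_scaleR norm_le_pnorm)+

lemma lattice_covers_if_cover_radius_less:
  assumes "is_lattice L" and "cover_radius p L < r"
  shows "\<exists>z\<in>L. pnorm p (y - z) \<le> r"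
proof -
  let ?F = "{r. (\<Union>z\<in>L. pball p r z) = UNIV}"
  \<comment> \<open>cover_radius is an Inf, which says nothing unless some radius covers at all.\<close>
  obtain R where "\<forall>y. \<exists>z\<in>L. pnorm p (y - z) \<le> R"
    using lattice_covers[OF norm_function_pnorm assms(1)] by blast
  then have "R \<in> ?F"
    by (auto simp: pball_def)
  then obtain r' where "r' \<in> ?F" and "r' < r"
    using cInf_lessD[of ?F r] assms(2) unfolding cover_radius_def by blast
  then have "y \<in> (\<Union>z\<in>L. pball p r' z)"
    by simp
  then obtain z where "z \<in> L" and "y \<in> pball p r' z"
    by blast
  then show ?thesis
    using \<open>r' < r\<close> unfolding pball_def by force
qed

theorem lemma13:
  fixes p :: normkind and \<epsilon> :: real and L :: "(real^'n) set" and x :: "real^'n"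
  assumes "\<epsilon> > 0" and "eps_lattice p \<epsilon> L"
  shows "x \<in> convex hull (pball p (7 * \<epsilon>) x \<inter> L)"
proof -
  have "is_lattice L" and "cover_radius p L < 13/4 * \<epsilon>"
    using assms unfolding eps_lattice_def by auto
  then have "\<And>y. \<exists>z\<in>L. pnorm p (y - z) \<le> 13/4 * \<epsilon>"
    by (rule lattice_covers_if_cover_radius_less)
  then have "x \<in> convex hull {z \<in> L. pnorm p (z - x) \<le> 7 * \<epsilon>}"
    by (rule norm_function.mem_convex_hull_if_covering[OF norm_function_pnorm]) (use assms(1) in auto)
  moreover have "{z \<in> L. pnorm p (z - x) \<le> 7 * \<epsilon>} = pball p (7 * \<epsilon>) x \<inter> L"
    by (auto simp: pball_def)
  ultimately show ?thesis
    by simp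
qed

end
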